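(* Let $X$ be a real Hilbert space, let $A\colon X\rightrightarrows X$ with $\operatorname{dom}A\ne\varnothing$, let $\rho\in\,]-1,+\infty[$, set $D=\operatorname{ran}(\mathrm{Id}+A)$, $T=J_A$ (i.e., $A=T^{-1}-\mathrm{Id}$), and $N=2(\rho+1)T-(2\rho+1)\mathrm{Id}$ (i.e., $T=\tfrac{2\rho+1}{2(\rho+1)}\mathrm{Id}+\tfrac{1}{2(\rho+1)}N$). Then: (i) $A$ is $\rho$-comonotone $\iff$ $N$ is nonexpansive. (ii) $A$ is maximally $\rho$-comonotone $\iff$ [$N$ is nonexpansive and $D=X$].
   Context: $J_A=(\mathrm{Id}+A)^{-1}$, defined on $D=\operatorname{ran}(\mathrm{Id}+A)$. An operator $N$ with domain $D$ is nonexpansive if it is single-valued and $\|Nx-Ny\|\le\|x-y\|$ for all $x,y\in D$. For $\rho\in\mathbb R$, $A$ is $\rho$-comonotone if $\langle x-y,u-v\rangle\ge\rho\|u-v\|^2$ for all $(x,u),(y,v)\in\operatorname{gra}A$; maximally $\rho$-comonotone if moreover no $\rho$-comonotone operator has a graph properly containing $\operatorname{gra}A$. *)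

theory Defs
  imports "HOL-Analysis.Analysis"
begin

text \<open>Set-valued operators A : X \<rightrightarrows> X are represented by their graphs
  (relations of type ('a \<times> 'a) set).\<close>

definition comonotone :: "real \<Rightarrow> ('a::real_inner \<times> 'a) set \<Rightarrow> bool" where
  "comonotone \<rho> A \<longleftrightarrow>
     (\<forall>x u y v. (x, u) \<in> A \<longrightarrow> (y, v) \<in> A \<longrightarrow> inner (x - y) (u - v) \<ge> \<rho> * (norm (u - v))\<^sup>2)"

definition max_comonotone :: "real \<Rightarrow> ('a::real_inner \<times> 'a) set \<Rightarrow> bool" where
  "max_comonotone \<rho> A \<longleftrightarrow> comonotone \<rho> A \<and> (\<forall>B. comonotone \<rho> B \<and> A \<subseteq> B \<longrightarrow> B = A)"

definition id_plus :: "('a::real_vector \<times> 'a) set \<Rightarrow> ('a \<times> 'a) set" where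
  "id_plus A = {(x, x + u) | x u. (x, u) \<in> A}"

definition resolvent :: "('a::real_vector \<times> 'a) set \<Rightarrow> ('a \<times> 'a) set" where
  "resolvent A = converse (id_plus A)"

definition Nop :: "real \<Rightarrow> ('a::real_vector \<times> 'a) set \<Rightarrow> ('a \<times> 'a) set" where
  "Nop \<rho> A = {(x, (2 * (\<rho> + 1)) *\<^sub>R t - (2 * \<rho> + 1) *\<^sub>R x) | x t. (x, t) \<in> resolvent A}"

definition nonexpansive_rel :: "('a::real_normed_vector \<times> 'a) set \<Rightarrow> bool" where
  "nonexpansive_rel N \<longleftrightarrow>
     (\<forall>x y z. (x, y) \<in> N \<longrightarrow> (x, z) \<in> N \<longrightarrow> y = z) \<and>
     (\<forall>x y x' y'. (x, y) \<in> N \<longrightarrow> (x', y') \<in> N \<longrightarrow> norm (y - y') \<le> norm (x - x'))"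

end

theory Submission
  imports Defs
begin

(* Graph points (t, u) of A correspond to graph points (t + u, t - (2\<rho>+1) u) of N, and for two
   such points
     |(t+u) - (s+v)|^2 - |(t - (2\<rho>+1)u) - (s - (2\<rho>+1)v)|^2
       = 4(\<rho>+1) (<t - s, u - v> - \<rho> |u - v|^2),
   so for \<rho> > -1 comonotonicity of A is exactly nonexpansiveness of N; this is (i).
   For (ii), if ran(Id + A) = X then a new point (t, u) of a comonotone extension shares t + u
   with some (t', u') in gra A, and comonotonicity forces (\<rho>+1) |u - u'|^2 \<le> 0.  Conversely,
   for maximal A and any x, Kirszbraun's one-point extension theorem extends N nonexpansively to x;
   the new value comes from a point (t, u) with t + u = x that is comonotone with A, hence lies in A.
   Kirszbraun's theorem is proved first for finitely many constraints, by minimising the largest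
   ratio |z - y_i| / |x - c_i| over the convex hull of the y_i: the minimiser lies in the hull of
   the active points, and a variance identity bounds the ratio by 1.  The general case follows
   because closed bounded convex sets with the finite intersection property in a Hilbert space
   intersect: minimal-norm points of growing finite intersections form a Cauchy sequence. *)

lemma sum_pairwise_norm_diff_sq:
  fixes u :: "'i \<Rightarrow> 'a::real_inner"
  assumes "finite I" "sum \<mu> I = 1"
  shows "(\<Sum>i\<in>I. \<Sum>j\<in>I. \<mu> i * \<mu> j * (norm (u i - u j))\<^sup>2)
         = 2 * (\<Sum>i\<in>I. \<mu> i * (norm (u i - w))\<^sup>2) - 2 * (norm ((\<Sum>i\<in>I. \<mu> i *\<^sub>R u i) - w))\<^sup>2"
proof -
  define a where "a i = u i - w" for i
  have expand: "(norm (u i - u j))\<^sup>2 = (norm (a i))\<^sup>2 + (norm (a j))\<^sup>2 - 2 * (a i \<bullet> a j)" for i j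
  proof -
    have "u i - u j = a i - a j" unfolding a_def by simp
    then show ?thesis by (simp add: power2_norm_eq_inner inner_diff_left inner_diff_right inner_commute)
  qed
  have centred: "(\<Sum>i\<in>I. \<mu> i *\<^sub>R u i) - w = (\<Sum>i\<in>I. \<mu> i *\<^sub>R a i)"
    unfolding a_def using assms by (simp add: scaleR_diff_right sum_subtractf scaleR_sum_left[symmetric])
  have "(\<Sum>i\<in>I. \<Sum>j\<in>I. \<mu> i * \<mu> j * (norm (u i - u j))\<^sup>2)
     = (\<Sum>i\<in>I. \<Sum>j\<in>I. \<mu> j * (\<mu> i * (norm (a i))\<^sup>2)) + (\<Sum>i\<in>I. \<Sum>j\<in>I. \<mu> i * (\<mu> j * (norm (a j))\<^sup>2))
       - 2 * (\<Sum>i\<in>I. \<Sum>j\<in>I. (\<mu> i *\<^sub>R a i) \<bullet> (\<mu> j *\<^sub>R a j))"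
    unfolding expand by (simp add: algebra_simps sum_subtractf sum.distrib sum_distrib_left)
  also have "\<dots> = 2 * (\<Sum>i\<in>I. \<mu> i * (norm (a i))\<^sup>2) - 2 * ((\<Sum>i\<in>I. \<mu> i *\<^sub>R a i) \<bullet> (\<Sum>j\<in>I. \<mu> j *\<^sub>R a j))"
    using assms by (simp add: sum_distrib_left[symmetric] sum_distrib_right[symmetric] inner_sum_left inner_sum_right
        sum.swap[of "\<lambda>i j. \<mu> i * (\<mu> j * (norm (a j))\<^sup>2)"]) (simp add: sum_distrib_left, rule sum.swap)
  also have "\<dots> = 2 * (\<Sum>i\<in>I. \<mu> i * (norm (u i - w))\<^sup>2) - 2 * (norm ((\<Sum>i\<in>I. \<mu> i *\<^sub>R u i) - w))\<^sup>2"
    unfolding centred by (simp add: a_def power2_norm_eq_inner)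
  finally show ?thesis .
qed

lemma convex_hull_finite_indexed:
  fixes y :: "'i \<Rightarrow> 'a::real_vector"
  assumes "finite I" "z \<in> convex hull (y ` I)"
  obtains \<mu> where "\<forall>i\<in>I. 0 \<le> \<mu> i" "sum \<mu> I = 1" "(\<Sum>i\<in>I. \<mu> i *\<^sub>R y i) = z"
proof -
  define K where "K = {(\<Sum>i\<in>I. \<mu> i *\<^sub>R y i) | \<mu>. (\<forall>i\<in>I. 0 \<le> \<mu> i) \<and> sum \<mu> I = 1}"
  have "y j \<in> K" if "j \<in> I" for j
  proof -
    have "(\<Sum>i\<in>I. (if i = j then 1 else 0) *\<^sub>R y i) = y j"
      using that assms(1) by (simp add: if_distrib[of "\<lambda>c. c *\<^sub>R _"] cong: if_cong)
    then show ?thesis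
      unfolding K_def using that assms(1) by (intro CollectI exI[of _ "\<lambda>i. if i = j then 1 else 0"]) auto
  qed
  moreover have "convex K" unfolding convex_def
  proof (intro ballI allI impI)
    fix p q :: 'a and a b :: real
    assume "p \<in> K" "q \<in> K" and ab: "0 \<le> a" "0 \<le> b" "a + b = 1"
    then obtain \<mu> \<nu> where \<mu>: "\<forall>i\<in>I. 0 \<le> \<mu> i" "sum \<mu> I = 1" "p = (\<Sum>i\<in>I. \<mu> i *\<^sub>R y i)"
      and \<nu>: "\<forall>i\<in>I. 0 \<le> \<nu> i" "sum \<nu> I = 1" "q = (\<Sum>i\<in>I. \<nu> i *\<^sub>R y i)"
      unfolding K_def by blast
    have "a *\<^sub>R p + b *\<^sub>R q = (\<Sum>i\<in>I. (a * \<mu> i + b * \<nu> i) *\<^sub>R y i)"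
      unfolding \<mu>(3) \<nu>(3) by (simp add: scaleR_sum_right sum.distrib scaleR_add_left)
    moreover have "\<forall>i\<in>I. 0 \<le> a * \<mu> i + b * \<nu> i" "(\<Sum>i\<in>I. a * \<mu> i + b * \<nu> i) = 1"
      using \<mu> \<nu> ab by (simp_all add: sum.distrib sum_distrib_left[symmetric])
    ultimately show "a *\<^sub>R p + b *\<^sub>R q \<in> K" unfolding K_def by (intro CollectI exI[of _ "\<lambda>i. a * \<mu> i + b * \<nu> i"]) simp
  qed
  ultimately have "convex hull (y ` I) \<subseteq> K" by (intro hull_minimal) auto
  with assms(2) that show ?thesis unfolding K_def by auto
qed

lemma continuous_on_Max:
  fixes h :: "'i \<Rightarrow> 'a::topological_space \<Rightarrow> real"
  assumes "finite I" "I \<noteq> {}" "\<And>i. i \<in> I \<Longrightarrow> continuous_on S (h i)"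
  shows "continuous_on S (\<lambda>z. Max ((\<lambda>i. h i z) ` I))"
  using assms
proof (induction I rule: finite_ne_induct)
  case (insert x F)
  then have "continuous_on S (\<lambda>z. max (h x z) (Max ((\<lambda>i. h i z) ` F)))"
    by (intro continuous_on_max) auto
  with insert show ?case by simp
qed simp

lemma norm_diff_less_toward_projection:
  fixes z p q :: "'a::real_inner"
  assumes obtuse: "(z - p) \<bullet> (q - p) \<le> 0" and "p \<noteq> z" "0 < t" "t \<le> 1"
  shows "norm (z + t *\<^sub>R (p - z) - q) < norm (z - q)"
proof -
  define \<delta> where "\<delta> = norm (p - z)"
  have "\<delta> > 0" using \<open>p \<noteq> z\<close> unfolding \<delta>_def by simp
  have "(norm (z + t *\<^sub>R (p - z) - q))\<^sup>2
      = (norm (z - q))\<^sup>2 - t * (2 - t) * \<delta>\<^sup>2 + 2 * t * ((z - p) \<bullet> (q - p))"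
    unfolding \<delta>_def power2_norm_eq_inner
    by (simp add: inner_add_left inner_add_right inner_diff_left inner_diff_right inner_commute
        algebra_simps power2_eq_square)
  also have "\<dots> < (norm (z - q))\<^sup>2"
  proof -
    have "0 < t * (2 - t) * \<delta>\<^sup>2" using \<open>\<delta> > 0\<close> \<open>0 < t\<close> \<open>t \<le> 1\<close> by simp
    moreover have "2 * t * ((z - p) \<bullet> (q - p)) \<le> 0" using obtuse \<open>0 < t\<close> by (simp add: mult_nonneg_nonpos)
    ultimately show ?thesis by linarith
  qed
  finally show ?thesis by (rule power2_less_imp_less) simp
qed

lemma small_step_keeps_strict_bounds:
  fixes z v :: "'a::real_normed_vector"
  assumes "finite J" "\<And>i. i \<in> J \<Longrightarrow> norm (z - y i) < R i"
  obtains t where "0 < t" "t < 1" "\<And>i. i \<in> J \<Longrightarrow> norm (z + t *\<^sub>R v - y i) < R i"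
proof -
  have "\<forall>\<^sub>F t in at_right 0. \<forall>i\<in>J. norm (z + t *\<^sub>R v - y i) < R i"
  proof (intro eventually_ball_finite ballI)
    fix i assume "i \<in> J"
    moreover have "((\<lambda>t. norm (z + t *\<^sub>R v - y i)) \<longlongrightarrow> norm (z + 0 *\<^sub>R v - y i)) (at_right 0)"
      by (intro tendsto_intros)
    ultimately show "\<forall>\<^sub>F t in at_right 0. norm (z + t *\<^sub>R v - y i) < R i"
      using assms(2) by (simp add: order_tendstoD(2))
  qed (use assms(1) in simp)
  moreover have "\<forall>\<^sub>F t in at_right 0. t \<in> {0<..<1::real}" by (rule eventually_at_right_real) simp
  ultimately have "\<forall>\<^sub>F t in at_right 0. (\<forall>i\<in>J. norm (z + t *\<^sub>R v - y i) < R i) \<and> t \<in> {0<..<1}"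
    by (rule eventually_conj)
  then obtain t where "(\<forall>i\<in>J. norm (z + t *\<^sub>R v - y i) < R i) \<and> t \<in> {0<..<1}"
    using eventually_happens'[OF trivial_limit_at_right_real] by blast
  with that show thesis by auto
qed

lemma minimizer_in_convex_hull_of_active:
  fixes y :: "'i \<Rightarrow> 'a::real_inner"
  assumes fin: "finite I" and "convex K" "z \<in> K" "y ` I \<subseteq> K"
    and bound: "\<And>i. i \<in> I \<Longrightarrow> norm (z - y i) \<le> R i"
    and minimal: "\<And>w. w \<in> K \<Longrightarrow> \<exists>i\<in>I. R i \<le> norm (w - y i)"
  shows "z \<in> convex hull (y ` {i\<in>I. norm (z - y i) = R i})"
proof (rule ccontr)
  define Ia where "Ia = {i\<in>I. norm (z - y i) = R i}"
  define C where "C = convex hull (y ` Ia)"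
  assume "z \<notin> convex hull (y ` {i\<in>I. norm (z - y i) = R i})"
  then have "z \<notin> C" unfolding C_def Ia_def .
  have "compact C" unfolding C_def Ia_def using fin by (simp add: finite_imp_compact_convex_hull)
  moreover have "C \<noteq> {}"
    using minimal[OF \<open>z \<in> K\<close>] bound unfolding C_def Ia_def by force
  moreover have "continuous_on C (dist z)" by (intro continuous_intros)
  ultimately obtain p where "p \<in> C" and p_closest: "\<forall>q\<in>C. dist z p \<le> dist z q"
    using continuous_attains_inf by blast
  then have "p \<noteq> z" using \<open>z \<notin> C\<close> by auto
  have "C \<subseteq> K" unfolding C_def Ia_def using \<open>convex K\<close> \<open>y ` I \<subseteq> K\<close> by (intro hull_minimal) auto
  \<comment> \<open>a small step from z towards p keeps the inactive distances below their bounds,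
    while by obtuseness of the projection it strictly decreases the active ones\<close>
  obtain t where t: "0 < t" "t < 1" and inactive: "\<And>i. i \<in> I - Ia \<Longrightarrow> norm (z + t *\<^sub>R (p - z) - y i) < R i"
  proof (rule small_step_keeps_strict_bounds[where v = "p - z"])
    show "finite (I - Ia)" using fin by simp
    show "norm (z - y i) < R i" if "i \<in> I - Ia" for i using bound that unfolding Ia_def by force
  qed (rule that)
  have "(1 - t) *\<^sub>R z + t *\<^sub>R p \<in> K"
    using convexD_alt[OF \<open>convex K\<close> \<open>z \<in> K\<close>, of p t] \<open>p \<in> C\<close> \<open>C \<subseteq> K\<close> t by auto
  moreover have "(1 - t) *\<^sub>R z + t *\<^sub>R p = z + t *\<^sub>R (p - z)" by (simp add: algebra_simps)
  ultimately have "z + t *\<^sub>R (p - z) \<in> K" by simp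
  then obtain i where "i \<in> I" and far: "R i \<le> norm (z + t *\<^sub>R (p - z) - y i)" using minimal by blast
  with inactive have "i \<in> Ia" by force
  then have "y i \<in> C" unfolding C_def by (simp add: hull_inc)
  then have "(z - p) \<bullet> (y i - p) \<le> 0"
    using any_closest_point_dot[of C p "y i" z] p_closest \<open>p \<in> C\<close> \<open>compact C\<close>
    by (simp add: C_def compact_imp_closed)
  then have "norm (z + t *\<^sub>R (p - z) - y i) < norm (z - y i)"
    using norm_diff_less_toward_projection \<open>p \<noteq> z\<close> t by force
  with far \<open>i \<in> Ia\<close> show False unfolding Ia_def by simp
qed

lemma weighted_variance_le_of_nonexpansive:
  fixes c y :: "'i \<Rightarrow> 'a::real_inner"
  assumes "finite J" "\<forall>i\<in>J. 0 \<le> \<mu> i" "sum \<mu> J = 1"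
    and lip: "\<And>i j. i \<in> J \<Longrightarrow> j \<in> J \<Longrightarrow> norm (y i - y j) \<le> norm (c i - c j)"
  shows "(\<Sum>i\<in>J. \<mu> i * (norm (y i - (\<Sum>j\<in>J. \<mu> j *\<^sub>R y j)))\<^sup>2) \<le> (\<Sum>i\<in>J. \<mu> i * (norm (c i - x))\<^sup>2)"
proof -
  have "(\<Sum>i\<in>J. \<Sum>j\<in>J. \<mu> i * \<mu> j * (norm (y i - y j))\<^sup>2) \<le> (\<Sum>i\<in>J. \<Sum>j\<in>J. \<mu> i * \<mu> j * (norm (c i - c j))\<^sup>2)"
    using assms by (intro sum_mono mult_left_mono power_mono) auto
  moreover have "(\<Sum>i\<in>J. \<Sum>j\<in>J. \<mu> i * \<mu> j * (norm (y i - y j))\<^sup>2)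
      = 2 * (\<Sum>i\<in>J. \<mu> i * (norm (y i - (\<Sum>j\<in>J. \<mu> j *\<^sub>R y j)))\<^sup>2)"
    using sum_pairwise_norm_diff_sq[OF \<open>finite J\<close> \<open>sum \<mu> J = 1\<close>, of y "\<Sum>j\<in>J. \<mu> j *\<^sub>R y j"] by simp
  moreover have "(\<Sum>i\<in>J. \<Sum>j\<in>J. \<mu> i * \<mu> j * (norm (c i - c j))\<^sup>2) \<le> 2 * (\<Sum>i\<in>J. \<mu> i * (norm (c i - x))\<^sup>2)"
    using sum_pairwise_norm_diff_sq[OF \<open>finite J\<close> \<open>sum \<mu> J = 1\<close>, of c x] by simp
  ultimately show ?thesis by linarith
qed

lemma ratio_le_one_of_mem_convex_hull:
  fixes c y :: "'i \<Rightarrow> 'a::real_inner"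
  assumes "finite J" "z \<in> convex hull (y ` J)"
    and lip: "\<And>i j. i \<in> J \<Longrightarrow> j \<in> J \<Longrightarrow> norm (y i - y j) \<le> norm (c i - c j)"
    and "\<And>i. i \<in> J \<Longrightarrow> c i \<noteq> x"
    and ratio: "\<And>i. i \<in> J \<Longrightarrow> norm (z - y i) = \<theta> * norm (x - c i)"
  shows "\<theta> \<le> 1"
proof -
  obtain \<mu> where \<mu>: "\<forall>i\<in>J. 0 \<le> \<mu> i" "sum \<mu> J = 1" "(\<Sum>i\<in>J. \<mu> i *\<^sub>R y i) = z"
    using convex_hull_finite_indexed[OF assms(1,2)] by blast
  define S where "S = (\<Sum>i\<in>J. \<mu> i * (norm (x - c i))\<^sup>2)"
  have "(\<Sum>i\<in>J. \<mu> i * (norm (y i - z))\<^sup>2) = \<theta>\<^sup>2 * S"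
    unfolding S_def sum_distrib_left
    by (rule sum.cong) (auto simp: ratio norm_minus_commute power_mult_distrib)
  moreover have "(\<Sum>i\<in>J. \<mu> i * (norm (c i - x))\<^sup>2) = S"
    unfolding S_def by (simp add: norm_minus_commute)
  ultimately have "\<theta>\<^sup>2 * S \<le> 1\<^sup>2 * S"
    using weighted_variance_le_of_nonexpansive[where y = y and c = c and x = x, OF assms(1) \<mu>(1,2) lip] \<mu>(3) by simp
  moreover have "S > 0"
  proof -
    have "\<not> (\<forall>i\<in>J. \<mu> i \<le> 0)" using \<mu>(2) sum_nonpos[of J \<mu>] by auto
    then obtain i where "i \<in> J" "\<mu> i > 0" by (auto simp: not_le)
    moreover have "norm (x - c i) > 0" using assms(4)[OF \<open>i \<in> J\<close>] by simp
    ultimately show ?thesis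
      unfolding S_def using \<mu>(1) by (intro sum_pos2[OF \<open>finite J\<close> \<open>i \<in> J\<close>]) auto
  qed
  ultimately have "\<theta>\<^sup>2 \<le> 1\<^sup>2" by (rule mult_right_le_imp_le)
  then show ?thesis by (rule power2_le_imp_le) simp
qed

lemma kirszbraun_one_point_finite:
  fixes c y :: "'i \<Rightarrow> 'a::real_inner"
  assumes fin: "finite I"
    and lip: "\<And>i j. i \<in> I \<Longrightarrow> j \<in> I \<Longrightarrow> norm (y i - y j) \<le> norm (c i - c j)"
  shows "\<exists>z. \<forall>i\<in>I. norm (z - y i) \<le> norm (x - c i)"
proof (cases "\<exists>k\<in>I. c k = x")
  case True
  then obtain k where "k \<in> I" "c k = x" by blast
  with lip show ?thesis by (intro exI[of _ "y k"]) auto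
next
  case False
  then have r_pos: "norm (x - c i) > 0" if "i \<in> I" for i using that by auto
  show ?thesis
  proof (cases "I = {}")
    case False
    define g where "g z = Max ((\<lambda>i. norm (z - y i) / norm (x - c i)) ` I)" for z
    have "compact (convex hull (y ` I))" "convex hull (y ` I) \<noteq> {}"
      using fin False by (simp_all add: finite_imp_compact_convex_hull)
    moreover have "continuous_on (convex hull (y ` I)) g"
      unfolding g_def by (rule continuous_on_Max[OF fin False]) (intro continuous_intros, use r_pos in force)
    ultimately obtain z where z: "z \<in> convex hull (y ` I)" and z_min: "\<forall>w\<in>convex hull (y ` I). g z \<le> g w"
      using continuous_attains_inf by blast
    have z_bound: "norm (z - y i) \<le> g z * norm (x - c i)" if "i \<in> I" for i
    proof -
      have "norm (z - y i) / norm (x - c i) \<le> g z" unfolding g_def using fin that by (intro Max_ge) auto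
      with r_pos[OF that] show ?thesis by (simp add: pos_divide_le_eq)
    qed
    define J where "J = {i\<in>I. norm (z - y i) = g z * norm (x - c i)}"
    have "z \<in> convex hull (y ` J)"
      unfolding J_def
    proof (rule minimizer_in_convex_hull_of_active[OF fin convex_convex_hull z])
      fix w assume "w \<in> convex hull (y ` I)"
      then have "g z \<le> g w" using z_min by blast
      moreover have "g w \<in> (\<lambda>i. norm (w - y i) / norm (x - c i)) ` I"
        unfolding g_def using fin False by (intro Max_in) auto
      then obtain i where "i \<in> I" "g w = norm (w - y i) / norm (x - c i)" by blast
      ultimately show "\<exists>i\<in>I. g z * norm (x - c i) \<le> norm (w - y i)" using r_pos by (auto simp: pos_le_divide_eq)
    qed (use z_bound in \<open>auto intro: hull_inc\<close>)
    moreover have "finite J" "J \<subseteq> I" unfolding J_def using fin by auto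
    ultimately have "g z \<le> 1"
      using lip \<open>\<not> (\<exists>k\<in>I. c k = x)\<close>
      by (intro ratio_le_one_of_mem_convex_hull[of J z y c x]) (auto simp: J_def)
    have "norm (z - y i) \<le> norm (x - c i)" if "i \<in> I" for i
    proof -
      have "g z * norm (x - c i) \<le> norm (x - c i)" using \<open>g z \<le> 1\<close> r_pos[OF that] by simp
      with z_bound[OF that] show ?thesis by linarith
    qed
    then show ?thesis by blast
  qed simp
qed

lemma convex_norm_diff_sq_le:
  fixes C :: "'a::real_inner set"
  assumes "convex C" "u \<in> C" "v \<in> C" "\<And>w. w \<in> C \<Longrightarrow> a \<le> norm w" "0 \<le> a"
    and "norm u \<le> b" "norm v \<le> b"
  shows "(norm (u - v))\<^sup>2 \<le> 4 * (b\<^sup>2 - a\<^sup>2)"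
proof -
  have "(1/2) *\<^sub>R u + (1/2) *\<^sub>R v \<in> C" using assms(1-3) by (intro convexD) auto
  then have "a \<le> norm ((1/2) *\<^sub>R (u + v))" using assms(4) by (simp add: scaleR_add_right)
  then have "(2 * a)\<^sup>2 \<le> (norm (u + v))\<^sup>2" using \<open>0 \<le> a\<close> by (intro power_mono) auto
  moreover have "(norm u)\<^sup>2 \<le> b\<^sup>2" "(norm v)\<^sup>2 \<le> b\<^sup>2" using assms(6,7) by (auto intro: power_mono)
  moreover have "(norm (u - v))\<^sup>2 = 2 * (norm u)\<^sup>2 + 2 * (norm v)\<^sup>2 - (norm (u + v))\<^sup>2"
    unfolding power2_norm_eq_inner
    by (simp add: inner_add_left inner_add_right inner_diff_left inner_diff_right inner_commute)
  ultimately show ?thesis by (simp add: power_mult_distrib)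
qed

lemma Cauchy_near_minimal_norm:
  fixes C :: "nat \<Rightarrow> 'a::real_inner set"
  assumes "decseq C" "\<And>n. convex (C n)" "\<And>n. z n \<in> C n"
    and "\<And>n w. w \<in> C n \<Longrightarrow> m n \<le> norm w" "\<And>n. 0 \<le> m n"
    and "decseq b" "\<And>n. norm (z n) \<le> b n" and gap: "(\<lambda>n. (b n)\<^sup>2 - (m n)\<^sup>2) \<longlonglongrightarrow> 0"
  shows "Cauchy z"
proof (rule CauchyI)
  fix \<epsilon> :: real assume "\<epsilon> > 0"
  then have "\<forall>\<^sub>F n in sequentially. 4 * ((b n)\<^sup>2 - (m n)\<^sup>2) < \<epsilon>\<^sup>2"
    by (intro order_tendstoD(2)[OF tendsto_mult_right_zero[OF gap]]) simp
  then obtain N where N: "4 * ((b N)\<^sup>2 - (m N)\<^sup>2) < \<epsilon>\<^sup>2"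
    by (auto simp: eventually_sequentially)
  have "norm (z i - z j) < \<epsilon>" if "N \<le> i" "N \<le> j" for i j
  proof -
    have "C i \<subseteq> C N" "C j \<subseteq> C N" "b i \<le> b N" "b j \<le> b N"
      using \<open>decseq C\<close> \<open>decseq b\<close> that by (simp_all add: decseq_def)
    then have "z i \<in> C N" "z j \<in> C N" "norm (z i) \<le> b N" "norm (z j) \<le> b N"
      using assms(3)[of i] assms(3)[of j] assms(7)[of i] assms(7)[of j] by auto
    then have "(norm (z i - z j))\<^sup>2 \<le> 4 * ((b N)\<^sup>2 - (m N)\<^sup>2)"
      using assms(2,4,5) by (intro convex_norm_diff_sq_le[of "C N"]) auto
    with N have "(norm (z i - z j))\<^sup>2 < \<epsilon>\<^sup>2" by linarith
    then show ?thesis by (rule power2_less_imp_less) (use \<open>\<epsilon> > 0\<close> in simp)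
  qed
  then show "\<exists>M. \<forall>i\<ge>M. \<forall>j\<ge>M. norm (z i - z j) < \<epsilon>" by (intro exI[of _ N]) simp
qed

lemma near_minimal_norm_diff_tendsto_zero:
  fixes C :: "nat \<Rightarrow> 'a::real_inner set"
  assumes "\<And>n. convex (C n)" "\<And>n. z n \<in> C n" "\<And>n. w n \<in> C n"
    and "\<And>n v. v \<in> C n \<Longrightarrow> m n \<le> norm v" "\<And>n. 0 \<le> m n"
    and "\<And>n. norm (z n) \<le> b n" "\<And>n. norm (w n) \<le> b n" and gap: "(\<lambda>n. (b n)\<^sup>2 - (m n)\<^sup>2) \<longlonglongrightarrow> 0"
  shows "(\<lambda>n. z n - w n) \<longlonglongrightarrow> 0"
proof (rule Lim_null_comparison)
  have "norm (z n - w n) \<le> sqrt (4 * ((b n)\<^sup>2 - (m n)\<^sup>2))" for n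
    using assms by (intro real_le_rsqrt convex_norm_diff_sq_le[of "C n"]) auto
  then show "\<forall>\<^sub>F n in sequentially. norm (z n - w n) \<le> sqrt (4 * ((b n)\<^sup>2 - (m n)\<^sup>2))" by simp
  show "(\<lambda>n. sqrt (4 * ((b n)\<^sup>2 - (m n)\<^sup>2))) \<longlonglongrightarrow> 0"
    using tendsto_real_sqrt[OF tendsto_mult_right_zero[OF gap, of 4]] by simp
qed

lemma near_minimal_norm_sequences_converge:
  fixes C :: "nat \<Rightarrow> 'a::{real_inner,complete_space} set"
  assumes "decseq C" "\<And>n. convex (C n)" "\<And>n v. v \<in> C n \<Longrightarrow> m n \<le> norm v" "\<And>n. 0 \<le> m n"
    and "decseq b" "\<And>n. \<exists>v\<in>C n. norm v \<le> b n" and gap: "(\<lambda>n. (b n)\<^sup>2 - (m n)\<^sup>2) \<longlonglongrightarrow> 0"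
  obtains p where "\<And>w. (\<And>n. w n \<in> C n) \<Longrightarrow> (\<And>n. norm (w n) \<le> b n) \<Longrightarrow> w \<longlonglongrightarrow> p"
proof -
  obtain z where z: "\<And>n. z n \<in> C n" "\<And>n. norm (z n) \<le> b n" using assms(6) by metis
  have "Cauchy z" by (rule Cauchy_near_minimal_norm[OF assms(1,2) z(1) assms(3-5) z(2) gap])
  then obtain p where "z \<longlonglongrightarrow> p" using Cauchy_convergent_iff convergent_def by blast
  have "w \<longlonglongrightarrow> p" if "\<And>n. w n \<in> C n" "\<And>n. norm (w n) \<le> b n" for w
  proof -
    have "(\<lambda>n. z n - w n) \<longlonglongrightarrow> 0"
      using assms(2) z(1) that(1) assms(3,4) z(2) that(2) gap by (rule near_minimal_norm_diff_tendsto_zero)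
    then have "(\<lambda>n. z n - (z n - w n)) \<longlonglongrightarrow> p - 0" using \<open>z \<longlonglongrightarrow> p\<close> by (intro tendsto_diff)
    then show ?thesis by simp
  qed
  then show thesis by (rule that)
qed

definition inf_norm :: "'a::real_normed_vector set \<Rightarrow> real" where
  "inf_norm X = Inf (norm ` X)"

lemma inf_norm_le: "x \<in> X \<Longrightarrow> inf_norm X \<le> norm x"
  unfolding inf_norm_def by (intro cInf_lower bdd_belowI[of _ 0]) auto

lemma inf_norm_nonneg: "X \<noteq> {} \<Longrightarrow> 0 \<le> inf_norm X"
  unfolding inf_norm_def by (intro cInf_greatest) auto

lemma exists_norm_less_inf_norm_add:
  assumes "X \<noteq> {}" "0 < \<epsilon>"
  shows "\<exists>x\<in>X. norm x < inf_norm X + \<epsilon>"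
  using cInf_lessD[of "norm ` X" "inf_norm X + \<epsilon>"] assms unfolding inf_norm_def by auto

lemma inf_norm_antimono:
  assumes "Y \<noteq> {}" "Y \<subseteq> X"
  shows "inf_norm X \<le> inf_norm Y"
  unfolding inf_norm_def using assms by (intro cInf_superset_mono bdd_belowI[of _ 0]) auto

lemma square_gap_tendsto_zero:
  fixes s :: real
  assumes "\<And>n. 0 \<le> m n" "\<And>n. m n \<le> s" "\<And>n. s - e n < m n" "e \<longlonglongrightarrow> 0"
  shows "(\<lambda>n. (s + e n)\<^sup>2 - (m n)\<^sup>2) \<longlonglongrightarrow> 0"
proof (rule tendsto_sandwich[where f = "\<lambda>n. 0" and h = "\<lambda>n. 2 * e n * (2 * s + e n)"])
  have "0 \<le> (s + e n)\<^sup>2 - (m n)\<^sup>2 \<and> (s + e n)\<^sup>2 - (m n)\<^sup>2 \<le> 2 * e n * (2 * s + e n)" for n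
  proof -
    have "(s + e n)\<^sup>2 - (m n)\<^sup>2 = (s + e n - m n) * (s + e n + m n)"
      by (simp add: power2_eq_square algebra_simps)
    then show ?thesis using assms(1-3)[of n] by (auto intro!: mult_mono)
  qed
  then show "\<forall>\<^sub>F n in sequentially. 0 \<le> (s + e n)\<^sup>2 - (m n)\<^sup>2"
    "\<forall>\<^sub>F n in sequentially. (s + e n)\<^sup>2 - (m n)\<^sup>2 \<le> 2 * e n * (2 * s + e n)" by simp_all
  show "(\<lambda>n. 2 * e n * (2 * s + e n)) \<longlonglongrightarrow> 0" using assms(4) by (auto intro!: tendsto_eq_intros)
qed simp

lemma incseq_finite_subsets_approx_Sup:
  fixes f :: "'i set \<Rightarrow> real"
  assumes mono: "\<And>F G. F \<subseteq> G \<Longrightarrow> finite G \<Longrightarrow> G \<subseteq> D \<Longrightarrow> f F \<le> f G" and "\<And>n. 0 < e n"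
  obtains F where "\<And>n. finite (F n)" "\<And>n. F n \<subseteq> D" "incseq F"
    "\<And>n. Sup (f ` {G. finite G \<and> G \<subseteq> D}) - e n < f (F n)"
proof -
  have "\<exists>G. finite G \<and> G \<subseteq> D \<and> Sup (f ` {G. finite G \<and> G \<subseteq> D}) - e n < f G" for n
    using less_cSupD[of "f ` {G. finite G \<and> G \<subseteq> D}" "Sup (f ` {G. finite G \<and> G \<subseteq> D}) - e n"] assms(2)[of n]
    by force
  then obtain H where H: "\<And>n. finite (H n) \<and> H n \<subseteq> D \<and> Sup (f ` {G. finite G \<and> G \<subseteq> D}) - e n < f (H n)"
    by metis
  define F where "F n = (\<Union>k\<le>n. H k)" for n
  have "finite (F n)" "F n \<subseteq> D" for n using H unfolding F_def by auto
  moreover have "incseq F" unfolding F_def incseq_def by (auto intro: order.trans)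
  moreover have "Sup (f ` {G. finite G \<and> G \<subseteq> D}) - e n < f (F n)" for n
    using H[of n] mono[of "H n" "F n"] \<open>finite (F n)\<close> \<open>F n \<subseteq> D\<close> unfolding F_def by force
  ultimately show thesis using that by blast
qed

lemma bdd_above_inf_norm_finite_Inter:
  assumes "d0 \<in> D" "bounded (K d0)" and fip: "\<And>F. finite F \<Longrightarrow> F \<subseteq> D \<Longrightarrow> (\<Inter>d\<in>F. K d) \<noteq> {}"
  shows "bdd_above ((\<lambda>F. inf_norm (\<Inter>d\<in>F. K d)) ` {F. finite F \<and> F \<subseteq> D})"
proof -
  obtain B where B: "\<And>v. v \<in> K d0 \<Longrightarrow> norm v \<le> B" using assms(2) bounded_iff by metis
  have "inf_norm (\<Inter>d\<in>G. K d) \<le> B" if "finite G" "G \<subseteq> D" for G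
  proof -
    have "(\<Inter>d\<in>insert d0 G. K d) \<noteq> {}" using fip[of "insert d0 G"] that \<open>d0 \<in> D\<close> by simp
    then obtain v where v: "v \<in> (\<Inter>d\<in>insert d0 G. K d)" by blast
    then have "inf_norm (\<Inter>d\<in>G. K d) \<le> inf_norm (\<Inter>d\<in>insert d0 G. K d)" by (intro inf_norm_antimono) auto
    also have "\<dots> \<le> norm v" using v by (rule inf_norm_le)
    also have "\<dots> \<le> B" using B v by blast
    finally show ?thesis .
  qed
  then show ?thesis by (intro bdd_aboveI[of _ B]) auto
qed

lemma closed_convex_bounded_Inter_nonempty:
  fixes K :: "'i \<Rightarrow> 'a::{real_inner,complete_space} set"
  assumes convex: "\<And>d. d \<in> D \<Longrightarrow> convex (K d)" and closed: "\<And>d. d \<in> D \<Longrightarrow> closed (K d)"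
    and bounded: "\<And>d. d \<in> D \<Longrightarrow> bounded (K d)"
    and fip: "\<And>F. finite F \<Longrightarrow> F \<subseteq> D \<Longrightarrow> (\<Inter>d\<in>F. K d) \<noteq> {}"
  shows "(\<Inter>d\<in>D. K d) \<noteq> {}"
proof (cases "D = {}")
  case False
  then obtain d0 where "d0 \<in> D" by blast
  define m where "m F = inf_norm (\<Inter>d\<in>F. K d)" for F
  have m_mono: "m F \<le> m G" if "F \<subseteq> G" "finite G" "G \<subseteq> D" for F G
    unfolding m_def using that fip by (intro inf_norm_antimono) auto
  define s where "s = Sup (m ` {F. finite F \<and> F \<subseteq> D})"
  have m_le_s: "m F \<le> s" if "finite F" "F \<subseteq> D" for F
    unfolding s_def m_def using that bdd_above_inf_norm_finite_Inter[OF \<open>d0 \<in> D\<close> bounded[OF \<open>d0 \<in> D\<close>] fip]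
    by (intro cSup_upper) auto
  define e where "e n = 1 / real (Suc n)" for n
  have "e \<longlonglongrightarrow> 0" unfolding e_def by (rule LIMSEQ_Suc[OF lim_inverse_n'])
  have e_pos: "0 < e n" for n unfolding e_def by simp
  then obtain F where F: "\<And>n. finite (F n)" "\<And>n. F n \<subseteq> D" "incseq F" "\<And>n. s - e n < m (F n)"
    using incseq_finite_subsets_approx_Sup[of D m e, OF m_mono] unfolding s_def by blast
  define C where "C n = (\<Inter>d\<in>F n. K d)" for n
  have C_convex: "convex (C n)" for n using F(2) convex unfolding C_def by (auto intro: convex_INT)
  have C_min: "m (F n) \<le> norm v" if "v \<in> C n" for n v using that unfolding C_def m_def by (rule inf_norm_le)
  have m_F_nonneg: "0 \<le> m (F n)" for n unfolding m_def using fip[OF F(1,2)] by (rule inf_norm_nonneg)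
  have gap: "(\<lambda>n. (s + e n)\<^sup>2 - (m (F n))\<^sup>2) \<longlonglongrightarrow> 0"
    by (rule square_gap_tendsto_zero[OF m_F_nonneg m_le_s[OF F(1,2)] F(4) \<open>e \<longlonglongrightarrow> 0\<close>])
  have near_min: "\<exists>v. v \<in> C n \<and> v \<in> (\<Inter>d\<in>G. K d) \<and> norm v \<le> s + e n" if "finite G" "G \<subseteq> D" for G n
  proof -
    have fin: "finite (F n \<union> G)" "F n \<union> G \<subseteq> D" using F(1,2) that by auto
    obtain v where v: "v \<in> (\<Inter>d\<in>F n \<union> G. K d)" "norm v < m (F n \<union> G) + e n"
      using exists_norm_less_inf_norm_add[OF fip[OF fin] e_pos] unfolding m_def by blast
    have "norm v \<le> s + e n" using v(2) m_le_s[OF fin] by linarith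
    moreover have "v \<in> C n" "v \<in> (\<Inter>d\<in>G. K d)" using v(1) unfolding C_def by auto
    ultimately show ?thesis by blast
  qed
  have C_decseq: "decseq C" using \<open>incseq F\<close> unfolding C_def incseq_def decseq_def by blast
  have bound_decseq: "decseq (\<lambda>n. s + e n)" unfolding e_def decseq_def by (simp add: frac_le)
  have "\<exists>v\<in>C n. norm v \<le> s + e n" for n using near_min[of "{}"] by auto
  then obtain p where p: "\<And>w. (\<And>n. w n \<in> C n) \<Longrightarrow> (\<And>n. norm (w n) \<le> s + e n) \<Longrightarrow> w \<longlonglongrightarrow> p"
    using near_minimal_norm_sequences_converge[where C = C and m = "\<lambda>n. m (F n)" and b = "\<lambda>n. s + e n",
        OF C_decseq C_convex C_min m_F_nonneg bound_decseq _ gap] by blast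
  have "p \<in> K d" if "d \<in> D" for d
  proof -
    have "\<forall>n. \<exists>v. v \<in> C n \<and> v \<in> K d \<and> norm v \<le> s + e n" using near_min[of "{d}"] \<open>d \<in> D\<close> by simp
    then obtain w where w: "\<And>n. w n \<in> C n" "\<And>n. w n \<in> K d" "\<And>n. norm (w n) \<le> s + e n" by metis
    with closed[OF \<open>d \<in> D\<close>] p[OF w(1,3)] show "p \<in> K d" by (meson closed_sequentially)
  qed
  then show ?thesis by blast
qed simp

lemma kirszbraun_one_point:
  fixes S :: "('a::{real_inner,complete_space} \<times> 'a) set"
  assumes "\<And>c y c' y'. (c, y) \<in> S \<Longrightarrow> (c', y') \<in> S \<Longrightarrow> norm (y - y') \<le> norm (c - c')"
  shows "\<exists>w. \<forall>c y. (c, y) \<in> S \<longrightarrow> norm (w - y) \<le> norm (x - c)"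
proof -
  have mem_cball_iff: "w \<in> cball y r \<longleftrightarrow> norm (w - y) \<le> r" for w y :: 'a and r
    by (simp add: dist_norm norm_minus_commute)
  have "(\<Inter>d\<in>S. cball (snd d) (norm (x - fst d))) \<noteq> {}"
  proof (rule closed_convex_bounded_Inter_nonempty)
    fix F assume "finite F" "F \<subseteq> S"
    then obtain z where "\<forall>d\<in>F. norm (z - snd d) \<le> norm (x - fst d)"
      using kirszbraun_one_point_finite[of F snd fst x] assms by (metis prod.collapse subsetD)
    then have "z \<in> (\<Inter>d\<in>F. cball (snd d) (norm (x - fst d)))" unfolding INT_iff mem_cball_iff .
    then show "(\<Inter>d\<in>F. cball (snd d) (norm (x - fst d))) \<noteq> {}" by blast
  qed auto
  then obtain w where "w \<in> (\<Inter>d\<in>S. cball (snd d) (norm (x - fst d)))" by blast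
  then have "norm (w - y) \<le> norm (x - c)" if "(c, y) \<in> S" for c y
    using that unfolding INT_iff mem_cball_iff by fastforce
  then show ?thesis by blast
qed

lemma norm_reflection_le_iff:
  fixes a b :: "'a::real_inner"
  assumes "\<rho> > -1"
  shows "norm (a - (2 * \<rho> + 1) *\<^sub>R b) \<le> norm (a + b) \<longleftrightarrow> \<rho> * (norm b)\<^sup>2 \<le> inner a b"
proof -
  have "(norm (a + b))\<^sup>2 - (norm (a - (2 * \<rho> + 1) *\<^sub>R b))\<^sup>2 = 4 * (\<rho> + 1) * (inner a b - \<rho> * (norm b)\<^sup>2)"
    by (simp add: power2_norm_eq_inner inner_add_left inner_add_right inner_diff_left inner_diff_right
        inner_commute algebra_simps)
  moreover have "norm (a - (2 * \<rho> + 1) *\<^sub>R b) \<le> norm (a + b) \<longleftrightarrow> (norm (a - (2 * \<rho> + 1) *\<^sub>R b))\<^sup>2 \<le> (norm (a + b))\<^sup>2"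
    using abs_le_square_iff[of "norm (a - (2 * \<rho> + 1) *\<^sub>R b)" "norm (a + b)"] by simp
  moreover have "0 \<le> 4 * (\<rho> + 1) * (inner a b - \<rho> * (norm b)\<^sup>2) \<longleftrightarrow> \<rho> * (norm b)\<^sup>2 \<le> inner a b"
    using assms by (simp add: zero_le_mult_iff)
  ultimately show ?thesis by linarith
qed

lemma mem_Nop_iff:
  "(x, w) \<in> Nop \<rho> A \<longleftrightarrow> (\<exists>t u. (t, u) \<in> A \<and> x = t + u \<and> w = t - (2 * \<rho> + 1) *\<^sub>R u)"
proof -
  have e: "(2 * (\<rho> + 1)) *\<^sub>R t - (2 * \<rho> + 1) *\<^sub>R (t + u) = t - (2 * \<rho> + 1) *\<^sub>R u" for t u :: 'a
    by (simp add: algebra_simps scaleR_2)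
  have "(x, w) \<in> Nop \<rho> A \<longleftrightarrow>
      (\<exists>t u. (t, u) \<in> A \<and> x = t + u \<and> w = (2 * (\<rho> + 1)) *\<^sub>R t - (2 * \<rho> + 1) *\<^sub>R (t + u))"
    unfolding Nop_def resolvent_def id_plus_def by blast
  then show ?thesis unfolding e .
qed

lemma Nop_pair_le_iff:
  fixes t u s v :: "'a::real_inner"
  assumes "\<rho> > -1"
  shows "norm ((t - (2 * \<rho> + 1) *\<^sub>R u) - (s - (2 * \<rho> + 1) *\<^sub>R v)) \<le> norm ((t + u) - (s + v))
    \<longleftrightarrow> \<rho> * (norm (u - v))\<^sup>2 \<le> inner (t - s) (u - v)"
proof -
  have "(t - (2 * \<rho> + 1) *\<^sub>R u) - (s - (2 * \<rho> + 1) *\<^sub>R v) = (t - s) - (2 * \<rho> + 1) *\<^sub>R (u - v)"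
    "(t + u) - (s + v) = (t - s) + (u - v)" by (simp_all add: algebra_simps)
  then show ?thesis using norm_reflection_le_iff[OF assms, of "t - s" "u - v"] by (simp only:)
qed

lemma nonexpansive_rel_iff:
  "nonexpansive_rel N \<longleftrightarrow> (\<forall>x y x' y'. (x, y) \<in> N \<longrightarrow> (x', y') \<in> N \<longrightarrow> norm (y - y') \<le> norm (x - x'))"
  (is "_ \<longleftrightarrow> ?lip")
proof
  assume ?lip
  moreover have "y = z" if "(x, y) \<in> N" "(x, z) \<in> N" for x y z
  proof -
    have "norm (y - z) \<le> norm (x - x)" using \<open>?lip\<close> that by blast
    then show ?thesis by simp
  qed
  ultimately show "nonexpansive_rel N" unfolding nonexpansive_rel_def by blast
qed (simp add: nonexpansive_rel_def)

lemma comonotone_iff_nonexpansive_Nop: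
  fixes A :: "('a::real_inner \<times> 'a) set"
  assumes "\<rho> > -1"
  shows "comonotone \<rho> A \<longleftrightarrow> nonexpansive_rel (Nop \<rho> A)"
  unfolding comonotone_def nonexpansive_rel_iff mem_Nop_iff Nop_pair_le_iff[OF assms, symmetric]
  by blast

lemma comonotone_insert:
  assumes "comonotone \<rho> A" and "\<And>s v. (s, v) \<in> A \<Longrightarrow> \<rho> * (norm (u - v))\<^sup>2 \<le> inner (t - s) (u - v)"
  shows "comonotone \<rho> (insert (t, u) A)"
proof -
  have "inner (s - t) (v - u) = inner (t - s) (u - v)" for s v
    by (metis inner_minus_left inner_minus_right minus_diff_eq)
  then show ?thesis using assms unfolding comonotone_def by (auto simp: norm_minus_commute)
qed

lemma max_comonotone_imp_Range_id_plus:
  fixes A :: "('a::{real_inner, complete_space} \<times> 'a) set"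
  assumes "\<rho> > -1" "max_comonotone \<rho> A"
  shows "Range (id_plus A) = UNIV"
proof -
  have "x \<in> Range (id_plus A)" for x
  proof -
    have "comonotone \<rho> A" using assms(2) unfolding max_comonotone_def by blast
    then have "nonexpansive_rel (Nop \<rho> A)" using comonotone_iff_nonexpansive_Nop[OF assms(1)] by blast
    then obtain w where w: "\<And>c y. (c, y) \<in> Nop \<rho> A \<Longrightarrow> norm (w - y) \<le> norm (x - c)"
      using kirszbraun_one_point[of "Nop \<rho> A" x] unfolding nonexpansive_rel_iff by blast
    define u where "u = inverse (1 + (2 * \<rho> + 1)) *\<^sub>R (x - w)"
    define t where "t = x - u"
    have x: "x = t + u" unfolding t_def by simp
    have nz: "1 + (2 * \<rho> + 1) \<noteq> 0" using assms(1) by simp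
    have "(1 + (2 * \<rho> + 1)) *\<^sub>R u = x - w" unfolding u_def scaleR_scaleR right_inverse[OF nz] by simp
    then have w_eq: "w = t - (2 * \<rho> + 1) *\<^sub>R u" unfolding t_def scaleR_add_left by (simp add: algebra_simps)
    have pair: "\<rho> * (norm (u - v))\<^sup>2 \<le> inner (t - s) (u - v)" if "(s, v) \<in> A" for s v
    proof -
      have "(s + v, s - (2 * \<rho> + 1) *\<^sub>R v) \<in> Nop \<rho> A" using that by (auto simp: mem_Nop_iff)
      then have "norm (w - (s - (2 * \<rho> + 1) *\<^sub>R v)) \<le> norm (x - (s + v))" by (rule w)
      then show ?thesis unfolding w_eq x Nop_pair_le_iff[OF assms(1)] .
    qed
    have "comonotone \<rho> (insert (t, u) A)" using \<open>comonotone \<rho> A\<close> pair by (rule comonotone_insert)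
    then have "(t, u) \<in> A" using assms(2) unfolding max_comonotone_def by blast
    then show ?thesis unfolding x id_plus_def by blast
  qed
  then show ?thesis by blast
qed

lemma comonotone_Range_id_plus_imp_max_comonotone:
  fixes A :: "('a::real_inner \<times> 'a) set"
  assumes "\<rho> > -1" "comonotone \<rho> A" "Range (id_plus A) = UNIV"
  shows "max_comonotone \<rho> A"
  unfolding max_comonotone_def
proof (intro conjI allI impI)
  fix B assume B: "comonotone \<rho> B \<and> A \<subseteq> B"
  have "(t, u) \<in> A" if "(t, u) \<in> B" for t u
  proof -
    obtain t' u' where "(t', u') \<in> A" "t + u = t' + u'"
    proof -
      have "t + u \<in> Range (id_plus A)" using assms(3) by simp
      then show thesis using that unfolding id_plus_def by blast
    qed
    have "\<rho> * (norm (u - u'))\<^sup>2 \<le> inner (t - t') (u - u')"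
      using B that \<open>(t', u') \<in> A\<close> unfolding comonotone_def by blast
    moreover have "t - t' = -(u - u')" using \<open>t + u = t' + u'\<close> by (simp add: algebra_simps)
    then have "inner (t - t') (u - u') = - (norm (u - u'))\<^sup>2" by (simp only: inner_minus_left power2_norm_eq_inner)
    ultimately have "(\<rho> + 1) * (norm (u - u'))\<^sup>2 \<le> 0" by (simp add: distrib_right)
    then have "u = u'" using assms(1) by (simp add: mult_le_0_iff)
    with \<open>(t', u') \<in> A\<close> \<open>t + u = t' + u'\<close> show ?thesis by simp
  qed
  then show "B = A" using B by auto
qed (fact assms(2))

theorem proposition3p12:
  fixes A :: "('a::{real_inner, complete_space} \<times> 'a) set" and \<rho> :: real
  assumes "Domain A \<noteq> {}" and "\<rho> > -1"
  shows "(comonotone \<rho> A \<longleftrightarrow> nonexpansive_rel (Nop \<rho> A)) \<and>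
         (max_comonotone \<rho> A \<longleftrightarrow>
            nonexpansive_rel (Nop \<rho> A) \<and> Range (id_plus A) = UNIV)"
proof -
  have "max_comonotone \<rho> A \<longleftrightarrow> comonotone \<rho> A \<and> Range (id_plus A) = UNIV"
    using max_comonotone_imp_Range_id_plus[OF assms(2)] comonotone_Range_id_plus_imp_max_comonotone[OF assms(2)]
    unfolding max_comonotone_def by blast
  with comonotone_iff_nonexpansive_Nop[OF assms(2)] show ?thesis by blast
qed

end
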